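(* Let $\ell$ be a generic length vector of length $n\ge4$ having a nonempty gee, and let $m=n-3$. Then there is no subset $S\subset[\![m+2]\!]$ such that for every $I\subset[\![m+2]\!]$ with $|I|\le m$, $$\phi(R^{m-|I|}V_I)=\begin{cases}1&I\subset S,\\0&\text{otherwise.}\end{cases}$$
   Context: A generic length vector $\ell=(\ell_1,\ldots,\ell_n)$: positive reals, $\ell_1\le\cdots\le\ell_n<\ell_1+\cdots+\ell_{n-1}$, with no $S\subset[\![n]\!]=\{1,\ldots,n\}$ having $\sum_{i\in S}\ell_i=\sum_{i\notin S}\ell_i$. $\overline{M}(\ell)=\{(z_1,\ldots,z_n)\in(S^1)^n:\sum\ell_iz_i=0\}/O(2)$, a closed connected $m$-manifold. $S\subset[\![n]\!]$ is short if $\sum_{i\in S}\ell_i<\sum_{i\notin S}\ell_i$; a subgee is $S\subset[\![n-1]\!]$ with $S\cup\{n\}$ short; gees are the maximal subgees. Cohomology has $\mathbb{Z}_2$ coefficients. By Hausmann–Knudsen, $H^*(\overline{M}(\ell))$ is generated by $R,V_1,\ldots,V_{n-1}\in H^1$ subject only to: (i) monomials of the same degree divisible by exactly the same set of $V_i$'s are equal; with $V_I=\prod_{i\in I}V_i$, the classes $R^{d-|I|}V_I$ span $H^d$; (ii) $V_I=0$ unless $I$ is a subgee; (iii) for each subgee $S$ with $|S|\ge n-2-d$, $\sum_{T}R^{d-|T|}V_T=0$ in $H^d$, summed over $T\subset[\![n-1]\!]$, $|T|\le d$, $T\cap S=\emptyset$. $\phi:H^m(\overline{M}(\ell))\to\mathbb{Z}_2$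 is the isomorphism (evaluation on the fundamental class). *)

theory Defs
  imports Complex_Main
begin

text \<open>Length vectors are functions l :: nat => real, only the values l 1, ..., l n matter.
  The index set [[n]] is {1..n}.\<close>

definition generic_length :: "(nat \<Rightarrow> real) \<Rightarrow> nat \<Rightarrow> bool" where
  "generic_length l n \<longleftrightarrow>
     (\<forall>i\<in>{1..n}. 0 < l i) \<and>
     (\<forall>i j. 1 \<le> i \<longrightarrow> i \<le> j \<longrightarrow> j \<le> n \<longrightarrow> l i \<le> l j) \<and>
     l n < (\<Sum>i\<in>{1..n-1}. l i) \<and>
     (\<forall>S. S \<subseteq> {1..n} \<longrightarrow> (\<Sum>i\<in>S. l i) \<noteq> (\<Sum>i\<in>{1..n} - S. l i))"

definition short :: "(nat \<Rightarrow> real) \<Rightarrow> nat \<Rightarrow> nat set \<Rightarrow> bool" where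
  "short l n S \<longleftrightarrow> (\<Sum>i\<in>S. l i) < (\<Sum>i\<in>{1..n} - S. l i)"

definition subgee :: "(nat \<Rightarrow> real) \<Rightarrow> nat \<Rightarrow> nat set \<Rightarrow> bool" where
  "subgee l n S \<longleftrightarrow> S \<subseteq> {1..n-1} \<and> short l n (insert n S)"

definition gee :: "(nat \<Rightarrow> real) \<Rightarrow> nat \<Rightarrow> nat set \<Rightarrow> bool" where
  "gee l n G \<longleftrightarrow> subgee l n G \<and> (\<forall>S. subgee l n S \<longrightarrow> G \<subseteq> S \<longrightarrow> S = G)"

text \<open>Degree-d part of the Hausmann--Knudsen presentation. A vector of the free Z2-vector
  space on the monomial symbols R^(d-|I|) V_I (I a subset of [[n-1]], |I| <= d) is encoded as
  the (finite) set of those I having coefficient 1; addition is symmetric difference.\<close>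

definition mons :: "nat \<Rightarrow> nat \<Rightarrow> nat set set" where
  "mons n d = {I. I \<subseteq> {1..n-1} \<and> card I \<le> d}"

text \<open>Relations (ii) and (iii) in degree d.\<close>
definition HK_rels :: "(nat \<Rightarrow> real) \<Rightarrow> nat \<Rightarrow> nat \<Rightarrow> nat set set set" where
  "HK_rels l n d =
     {{I} | I. I \<in> mons n d \<and> \<not> subgee l n I} \<union>
     {{T \<in> mons n d. T \<inter> S = {}} | S. subgee l n S \<and> n \<le> card S + 2 + d}"

definition zsum :: "nat set set set \<Rightarrow> nat set set" where
  "zsum F = {I. odd (card {v \<in> F. I \<in> v})}"

definition HK_span :: "(nat \<Rightarrow> real) \<Rightarrow> nat \<Rightarrow> nat \<Rightarrow> nat set set set" where
  "HK_span l n d = {zsum F | F. finite F \<and> F \<subseteq> HK_rels l n d}"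

text \<open>phi(R^(m-|I|) V_I) for m = n - 3: the top class H^m is Z2, and phi is the
  isomorphism to Z2, so the value is 1 iff the class is nonzero, i.e. iff the symbol {I}
  is not in the span of the relations.\<close>
definition HK_phi :: "(nat \<Rightarrow> real) \<Rightarrow> nat \<Rightarrow> nat set \<Rightarrow> nat" where
  "HK_phi l n I = (if {I} \<notin> HK_span l n (n - 3) then 1 else 0)"

end

theory Submission
  imports Defs
begin

text \<open>Suppose the degree-m monomials R^(m-|I|) V_I were nonzero exactly for I \<subseteq> S. Then
  every face of S is a subgee by (ii), and every monomial outside the simplex on S vanishes,
  so each relation (iii) may be intersected with the faces of S. If |S| \<le> m, let B be a
  vertex of S, or a nonempty gee if S is empty. Relations (iii) for subgees A \<union> B', taken
  in an induction on A, show that the sum of the faces T of S with A \<subseteq> T and T \<inter> B' = {}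
  vanishes; for A = S - B this sum is the single monomial V_(S-B), which is nonzero since
  S - B \<subseteq> S. If |S| > m, then S contains [n-1] - {a} for some a, and for distinct b, c in
  it both [n-1] - {a,b} and [n-1] - {a,c} would be subgees; adding their shortness
  inequalities gives l n < l a, contradicting monotonicity of l.\<close>

subsection \<open>The Z2-span of the relations\<close>

lemma zsum_singleton: "zsum {v} = v"
proof -
  have "card {w \<in> {v}. I \<in> w} = (if I \<in> v then 1 else 0)" for I
    by (auto simp: Collect_conv_if)
  then show ?thesis
    unfolding zsum_def by auto
qed

lemma zsum_empty: "zsum {} = {}"
  unfolding zsum_def by simp

lemma zsum_subset_Union: "zsum F \<subseteq> \<Union>F"
proof
  fix I
  assume "I \<in> zsum F"
  then have "odd (card {v \<in> F. I \<in> v})"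
    unfolding zsum_def by simp
  then have "{v \<in> F. I \<in> v} \<noteq> {}"
    by (metis card.empty even_zero)
  then show "I \<in> \<Union>F"
    by blast
qed

lemma odd_card_sym_diff:
  assumes "finite A" "finite B"
  shows "odd (card (sym_diff A B)) \<longleftrightarrow> odd (card A) \<noteq> odd (card B)"
proof -
  have "card (sym_diff A B) = card (A - B) + card (B - A)"
    using assms by (intro card_Un_disjoint) auto
  moreover have "card A = card (A \<inter> B) + card (A - B)" "card B = card (A \<inter> B) + card (B - A)"
    using assms card_Int_Diff[of A B] card_Int_Diff[of B A] by (auto simp: Int_commute)
  ultimately show ?thesis
    by auto
qed

lemma zsum_sym_diff:
  assumes "finite F" "finite F'"
  shows "zsum (sym_diff F F') = sym_diff (zsum F) (zsum F')"
proof -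
  have "{v \<in> sym_diff F F'. I \<in> v} = sym_diff {v \<in> F. I \<in> v} {v \<in> F'. I \<in> v}" for I
    by auto
  then show ?thesis
    using assms odd_card_sym_diff[of "{v \<in> F. _ \<in> v}" "{v \<in> F'. _ \<in> v}"]
    unfolding zsum_def by auto
qed

lemma HK_rels_in_span: "r \<in> HK_rels l n d \<Longrightarrow> r \<in> HK_span l n d"
  unfolding HK_span_def using zsum_singleton[of r] by blast

lemma HK_span_empty: "{} \<in> HK_span l n d"
  unfolding HK_span_def using zsum_empty by blast

lemma HK_span_sym_diff:
  assumes "x \<in> HK_span l n d" "y \<in> HK_span l n d"
  shows "sym_diff x y \<in> HK_span l n d"
proof -
  obtain F F' where "finite F" "F \<subseteq> HK_rels l n d" "x = zsum F"
    and "finite F'" "F' \<subseteq> HK_rels l n d" "y = zsum F'"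
    using assms unfolding HK_span_def by auto
  then show ?thesis
    unfolding HK_span_def using zsum_sym_diff
    by (intro CollectI exI[of _ "sym_diff F F'"]) auto
qed

lemma HK_span_if_singletons_in_span:
  assumes "finite X" "\<And>T. T \<in> X \<Longrightarrow> {T} \<in> HK_span l n d"
  shows "X \<in> HK_span l n d"
  using assms
proof (induction X rule: finite_induct)
  case empty
  show ?case
    by (rule HK_span_empty)
next
  case (insert x X)
  then have "sym_diff X {x} \<in> HK_span l n d"
    by (intro HK_span_sym_diff) auto
  moreover have "sym_diff X {x} = insert x X"
    using insert by auto
  ultimately show ?case
    by simp
qed

lemma finite_mons: "finite (mons n d)"
  unfolding mons_def by (rule finite_subset[of _ "Pow {1..n-1}"]) auto

lemma HK_span_subset_mons: "v \<in> HK_span l n d \<Longrightarrow> v \<subseteq> mons n d"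
  unfolding HK_span_def HK_rels_def using zsum_subset_Union by fastforce

lemma HK_span_Int_Pow:
  assumes outside: "\<And>T. T \<in> mons n d \<Longrightarrow> \<not> T \<subseteq> S \<Longrightarrow> {T} \<in> HK_span l n d"
    and v: "v \<in> HK_span l n d"
  shows "v \<inter> Pow S \<in> HK_span l n d"
proof -
  have "v \<subseteq> mons n d"
    using v by (rule HK_span_subset_mons)
  then have "finite (v - Pow S)"
    using finite_mons by (auto intro: finite_subset)
  moreover have "{T} \<in> HK_span l n d" if "T \<in> v - Pow S" for T
    using that \<open>v \<subseteq> mons n d\<close> by (intro outside) auto
  ultimately have "v - Pow S \<in> HK_span l n d"
    by (rule HK_span_if_singletons_in_span)
  moreover have "sym_diff v (v - Pow S) = v \<inter> Pow S"
    by blast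
  ultimately show ?thesis
    using HK_span_sym_diff[OF v] by metis
qed

lemma generic_length_pos: "generic_length l n \<Longrightarrow> i \<in> {1..n} \<Longrightarrow> 0 < l i"
  unfolding generic_length_def by blast

lemma generic_length_mono:
  "generic_length l n \<Longrightarrow> 1 \<le> i \<Longrightarrow> i \<le> j \<Longrightarrow> j \<le> n \<Longrightarrow> l i \<le> l j"
  unfolding generic_length_def by blast

lemma subgee_subset:
  assumes "generic_length l n" "subgee l n A" "B \<subseteq> A"
  shows "subgee l n B"
proof -
  have pos: "\<And>i. i \<in> {1..n} \<Longrightarrow> 0 \<le> l i"
    using generic_length_pos[OF assms(1)] by (simp add: less_imp_le)
  have A: "A \<subseteq> {1..n-1}" "short l n (insert n A)"
    using assms(2) unfolding subgee_def by auto
  then have "finite (insert n A)" "A \<subseteq> {1..n}"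
    using finite_subset[OF A(1)] by (auto simp: subset_iff)
  then have "sum l (insert n B) \<le> sum l (insert n A)"
    using assms(3) pos by (intro sum_mono2) auto
  moreover have "sum l ({1..n} - insert n A) \<le> sum l ({1..n} - insert n B)"
    using assms(3) pos by (intro sum_mono2) auto
  ultimately have "short l n (insert n B)"
    using A(2) unfolding short_def by linarith
  then show ?thesis
    using A(1) assms(3) unfolding subgee_def by auto
qed

lemma subgee_if_nonzero_monomial:
  assumes "I \<in> mons n d" "{I} \<notin> HK_span l n d"
  shows "subgee l n I"
proof (rule ccontr)
  assume "\<not> subgee l n I"
  with assms(1) have "{I} \<in> HK_rels l n d"
    unfolding HK_rels_def by blast
  with assms(2) show False
    using HK_rels_in_span by blast
qed

lemma subgee_compl_pair_less:
  assumes "subgee l n ({1..n-1} - {a, x})"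
    and "a \<in> {1..n-1}" "x \<in> {1..n-1}" "y \<in> {1..n-1}" "a \<noteq> x" "a \<noteq> y" "x \<noteq> y"
  shows "l n + l y + sum l ({1..n-1} - {a, x, y}) < l a + l x"
proof -
  define R where "R = {1..n-1} - {a, x, y}"
  have "insert y R = {1..n-1} - {a, x}"
    using assms(4-7) unfolding R_def by blast
  then have "short l n (insert n (insert y R))"
    using assms(1) unfolding subgee_def by simp
  moreover have "finite R" "y \<notin> R" "n \<notin> R" "y \<noteq> n"
    using assms(4) unfolding R_def by auto
  moreover have "{1..n} - insert n (insert y R) = {a, x}"
    using assms(2-7) unfolding R_def by auto
  ultimately show ?thesis
    using assms(5) unfolding short_def R_def by (simp add: add.assoc)
qed

lemma not_subgee_both_compl_pairs:
  assumes "generic_length l n"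
    and "a \<in> {1..n-1}" "b \<in> {1..n-1}" "c \<in> {1..n-1}" "a \<noteq> b" "a \<noteq> c" "b \<noteq> c"
  shows "\<not> (subgee l n ({1..n-1} - {a, b}) \<and> subgee l n ({1..n-1} - {a, c}))"
proof
  assume subgees: "subgee l n ({1..n-1} - {a, b}) \<and> subgee l n ({1..n-1} - {a, c})"
  have "{a, c, b} = {a, b, c}"
    by auto
  then have "l n + l c + sum l ({1..n-1} - {a, b, c}) < l a + l b"
    "l n + l b + sum l ({1..n-1} - {a, b, c}) < l a + l c"
    using subgees assms(2-7) subgee_compl_pair_less[of l n a b c] subgee_compl_pair_less[of l n a c b]
    by simp_all
  moreover have "0 \<le> sum l ({1..n-1} - {a, b, c})"
    using generic_length_pos[OF assms(1)] by (intro sum_nonneg less_imp_le) auto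
  moreover have "l a \<le> l n"
    using assms(2) by (intro generic_length_mono[OF assms(1)]) auto
  ultimately show False
    by linarith
qed

subsection \<open>Monomials supported on a simplex\<close>

lemma HK_span_interval:
  assumes "generic_length l n" "n \<le> d + 3"
    and outside: "\<And>T. T \<in> mons n d \<Longrightarrow> \<not> T \<subseteq> S \<Longrightarrow> {T} \<in> HK_span l n d"
    and "finite A" "finite B" "B \<noteq> {}" "A \<inter> B = {}" "subgee l n (A \<union> B)"
  shows "{T \<in> mons n d \<inter> Pow S. A \<subseteq> T \<and> T \<inter> B = {}} \<in> HK_span l n d"
  using assms(4-8)
proof (induction A arbitrary: B rule: finite_induct)
  case empty
  then have "n \<le> card B + 2 + d"
    using assms(2) card_gt_0_iff[of B] by linarith
  then have relation: "{T \<in> mons n d. T \<inter> B = {}} \<in> HK_span l n d"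
    using empty.prems by (intro HK_rels_in_span) (auto simp: HK_rels_def)
  have "{T \<in> mons n d. T \<inter> B = {}} \<inter> Pow S \<in> HK_span l n d"
    by (rule HK_span_Int_Pow[OF _ relation], rule outside)
  moreover have "{T \<in> mons n d. T \<inter> B = {}} \<inter> Pow S =
      {T \<in> mons n d \<inter> Pow S. {} \<subseteq> T \<and> T \<inter> B = {}}"
    by blast
  ultimately show ?case
    by simp
next
  case (insert a A)
  have "subgee l n (A \<union> B)"
    by (rule subgee_subset[OF assms(1) insert.prems(4)]) auto
  then have "{T \<in> mons n d \<inter> Pow S. A \<subseteq> T \<and> T \<inter> B = {}} \<in> HK_span l n d"
    using insert.prems by (intro insert.IH) auto
  moreover have "{T \<in> mons n d \<inter> Pow S. A \<subseteq> T \<and> T \<inter> insert a B = {}} \<in> HK_span l n d"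
    using insert.prems insert.hyps(2) by (intro insert.IH) auto
  ultimately have "sym_diff {T \<in> mons n d \<inter> Pow S. A \<subseteq> T \<and> T \<inter> B = {}}
      {T \<in> mons n d \<inter> Pow S. A \<subseteq> T \<and> T \<inter> insert a B = {}} \<in> HK_span l n d"
    by (rule HK_span_sym_diff)
  moreover have "sym_diff {T \<in> mons n d \<inter> Pow S. A \<subseteq> T \<and> T \<inter> B = {}}
      {T \<in> mons n d \<inter> Pow S. A \<subseteq> T \<and> T \<inter> insert a B = {}} =
    {T \<in> mons n d \<inter> Pow S. insert a A \<subseteq> T \<and> T \<inter> B = {}}"
    using insert.prems(3) by auto
  ultimately show ?case
    by simp
qed

lemma HK_span_Diff_monomial:
  assumes "generic_length l n" "n \<le> d + 3"
    and outside: "\<And>T. T \<in> mons n d \<Longrightarrow> \<not> T \<subseteq> S \<Longrightarrow> {T} \<in> HK_span l n d"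
    and "S \<subseteq> {1..n-1}" "card (S - B) \<le> d"
    and "finite B" "B \<noteq> {}" "subgee l n (S \<union> B)"
  shows "{S - B} \<in> HK_span l n d"
proof -
  have "finite S"
    using assms(4) by (rule finite_subset) simp
  then have "{T \<in> mons n d \<inter> Pow S. S - B \<subseteq> T \<and> T \<inter> B = {}} \<in> HK_span l n d"
    using assms by (intro HK_span_interval) (auto simp: Un_Diff_cancel2)
  moreover have "{T \<in> mons n d \<inter> Pow S. S - B \<subseteq> T \<and> T \<inter> B = {}} = {S - B}"
    using assms(4,5) unfolding mons_def by auto
  ultimately show ?thesis
    by simp
qed

lemma no_small_nonzero_support:
  assumes "generic_length l n" "n \<le> d + 3"
    and nonzero_iff: "\<And>I. I \<in> mons n d \<Longrightarrow> {I} \<notin> HK_span l n d \<longleftrightarrow> I \<subseteq> S"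
    and S: "S \<subseteq> {1..n-1}" "card S \<le> d"
    and "subgee l n G" "G \<noteq> {}"
  shows False
proof -
  have "finite S"
    using S(1) by (rule finite_subset) simp
  have "S \<in> mons n d"
    using S unfolding mons_def by simp
  obtain B where B: "finite B" "B \<noteq> {}" "subgee l n (S \<union> B)"
  proof (cases "S = {}")
    case True
    moreover have "finite G"
      using assms(6) unfolding subgee_def by (auto intro: finite_subset)
    ultimately show ?thesis
      using that assms(6,7) by simp
  next
    case False
    then obtain j where "j \<in> S"
      by blast
    moreover have "subgee l n S"
      using \<open>S \<in> mons n d\<close> nonzero_iff by (intro subgee_if_nonzero_monomial) auto
    ultimately show ?thesis
      using that[of "{j}"] by (simp add: insert_absorb)
  qed
  have "card (S - B) \<le> d"
    using S(2) card_mono[OF \<open>finite S\<close>, of "S - B"] by auto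
  then have "S - B \<in> mons n d"
    using S(1) unfolding mons_def by auto
  moreover have "{S - B} \<in> HK_span l n d"
  proof (rule HK_span_Diff_monomial[OF assms(1,2) _ S(1) \<open>card (S - B) \<le> d\<close> B])
    show "{T} \<in> HK_span l n d" if "T \<in> mons n d" "\<not> T \<subseteq> S" for T
      using that nonzero_iff by blast
  qed
  ultimately show False
    using nonzero_iff by blast
qed

lemma exists_Diff_singleton_subset:
  assumes "finite A" "A \<noteq> {}" "S \<subseteq> A" "card A \<le> Suc (card S)"
  obtains a where "a \<in> A" "A - {a} \<subseteq> S"
proof (cases "S = A")
  case True
  with assms(2) that show ?thesis
    by blast
next
  case False
  then obtain a where a: "a \<in> A" "a \<notin> S"
    using assms(3) by blast
  then have "S = A - {a}"
    using assms by (intro card_seteq) auto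
  with a that show ?thesis
    by blast
qed

lemma large_set_has_non_subgee_subset:
  assumes "generic_length l n" "n \<ge> 4" "S \<subseteq> {1..n-1}" "n - 2 \<le> card S"
  obtains I where "I \<subseteq> S" "card I = n - 3" "\<not> subgee l n I"
proof -
  have card_bound: "card {1..n-1} \<le> Suc (card S)"
    using assms(4) by simp
  obtain a where a: "a \<in> {1..n-1}" "{1..n-1} - {a} \<subseteq> S"
    by (rule exists_Diff_singleton_subset[OF _ _ assms(3) card_bound]) (use assms(2) in auto)
  then have "\<not> card ({1..n-1} - {a}) \<le> Suc 0"
    using assms(2) by simp
  then obtain b c where bc: "b \<in> {1..n-1} - {a}" "c \<in> {1..n-1} - {a}" "b \<noteq> c"
    unfolding card_le_Suc0_iff_eq[OF finite_Diff[OF finite_atLeastAtMost]] by blast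
  have "{1..n-1} - {a, x} \<subseteq> S" "card ({1..n-1} - {a, x}) = n - 3"
    if "x \<in> {1..n-1} - {a}" for x
    using that a by (auto simp: card_Diff_subset)
  with not_subgee_both_compl_pairs[OF assms(1) a(1)] bc that show ?thesis
    by blast
qed

lemma HK_phi_not_subset_indicator:
  assumes "generic_length l n" "n \<ge> 4" "subgee l n G" "G \<noteq> {}" and S: "S \<subseteq> {1..n-1}"
    and phi: "\<And>I. I \<subseteq> {1..n-1} \<Longrightarrow> card I \<le> n - 3 \<Longrightarrow>
      HK_phi l n I = (if I \<subseteq> S then 1 else 0)"
  shows False
proof -
  have nonzero_iff: "{I} \<notin> HK_span l n (n - 3) \<longleftrightarrow> I \<subseteq> S" if "I \<in> mons n (n - 3)" for I
  proof -
    have "HK_phi l n I = (if I \<subseteq> S then 1 else 0)"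
      using that unfolding mons_def by (intro phi) auto
    then show ?thesis
      unfolding HK_phi_def by (auto split: if_splits)
  qed
  show False
  proof (cases "card S \<le> n - 3")
    case True
    show False
      by (rule no_small_nonzero_support[OF assms(1) _ nonzero_iff S True assms(3,4)]) simp
  next
    case False
    obtain I where I: "I \<subseteq> S" "card I = n - 3" "\<not> subgee l n I"
      by (rule large_set_has_non_subgee_subset[OF assms(1,2) S]) (use False in simp)
    then have "I \<in> mons n (n - 3)"
      using S unfolding mons_def by auto
    with I nonzero_iff subgee_if_nonzero_monomial show False
      by blast
  qed
qed

theorem lemma2p1:
  fixes l :: "nat \<Rightarrow> real" and n m :: nat
  assumes "generic_length l n" and "n \<ge> 4"
    and "\<exists>G. gee l n G \<and> G \<noteq> {}"
    and "m = n - 3"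
  shows "\<not> (\<exists>S. S \<subseteq> {1..m+2} \<and>
            (\<forall>I. I \<subseteq> {1..m+2} \<longrightarrow> card I \<le> m \<longrightarrow>
                 HK_phi l n I = (if I \<subseteq> S then 1 else 0)))"
proof -
  obtain G where G: "subgee l n G" "G \<noteq> {}"
    using assms(3) unfolding gee_def by blast
  have interval: "{1..n - 3 + 2} = {1..n-1}"
    using assms(2) by auto
  show ?thesis
    unfolding assms(4) interval
    by (intro notI, elim exE conjE, rule HK_phi_not_subset_indicator[OF assms(1,2) G]) auto
qed

end
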